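(* Let $p,q\in\mathbb R$. The differential equation $$x^3R'''(x)+4x^2R''(x)+2x(1-2p^2-4qx+2x^2)R'(x)-4(p^2+qx)R(x)=0$$ admits a unique formal solution of the form $R(x)=\frac1\pi+\frac1\pi\sum_{n\ge1}\pi^n d_n x^{-n}$, and its coefficients are given by $$d_1=-\frac q\pi,\quad d_2=-\frac{p^2+q^2}{2\pi^2},\quad d_{n+2}=\frac1\pi\frac{2n+1}{n+2}q\,d_{n+1}+\frac{1}{\pi^2}\frac{n-1}{n+2}\Big(p^2-\frac{n^2}{4}\Big)d_n\quad(n\ge1).$$
   Context: This differential equation is satisfied by $R(x)=\frac1\pi\rho_{(1),\infty}(x/\pi;2,p,q)$, the rescaled bulk density at the spectrum singularity of the generalised circular Jacobi ensemble with $\beta=2$ (probability density on $(-\pi,\pi]^N$ proportional to $\prod_l e^{q\theta_l}|1+e^{i\theta_l}|^{2p}\prod_{j<k}|e^{i\theta_k}-e^{i\theta_j}|^2$, with $\rho_{(1),\infty}(x)=\lim_{N\to\infty}\frac{2\pi}{N}\rho_{(1),N}(-\pi\,\mathrm{sgn}(x)+2\pi x/N)$). The series $\sum_n d_n x^{-n}$ is the non-oscillatory part of the large-$|x|$ asymptotic expansion of $\rho_{(1),\infty}(x;2,p,q)-1$. *)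

theory Defs
  imports Complex_Main
begin

text \<open>A formal (Laurent-type) series in the variable x is represented by its coefficient
  function c :: int \<Rightarrow> real, c k being the coefficient of x^k.  Formal series in
  x^(-1) are those with c k = 0 for k > 0.\<close>

definition fser_deriv :: "(int \<Rightarrow> real) \<Rightarrow> int \<Rightarrow> real" where
  "fser_deriv f = (\<lambda>k. of_int (k + 1) * f (k + 1))"

definition fser_xpow :: "nat \<Rightarrow> (int \<Rightarrow> real) \<Rightarrow> int \<Rightarrow> real" where
  "fser_xpow n f = (\<lambda>k. f (k - int n))"

definition ode_lhs :: "real \<Rightarrow> real \<Rightarrow> (int \<Rightarrow> real) \<Rightarrow> int \<Rightarrow> real" where
  "ode_lhs p q R = (\<lambda>k.
       fser_xpow 3 (fser_deriv (fser_deriv (fser_deriv R))) k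
     + 4 * fser_xpow 2 (fser_deriv (fser_deriv R)) k
     + 2 * (1 - 2 * p^2) * fser_xpow 1 (fser_deriv R) k
     - 8 * q * fser_xpow 2 (fser_deriv R) k
     + 4 * fser_xpow 3 (fser_deriv R) k
     - 4 * p^2 * R k
     - 4 * q * fser_xpow 1 R k)"

text \<open>The formal series R(x) = 1/pi + (1/pi) * sum_{n>=1} pi^n d_n x^(-n)
  (the value d 0 is irrelevant).\<close>
definition R_series :: "(nat \<Rightarrow> real) \<Rightarrow> int \<Rightarrow> real" where
  "R_series d = (\<lambda>k. if k > 0 then 0
                     else if k = 0 then 1 / pi
                     else (1 / pi) * pi ^ nat (- k) * d (nat (- k)))"

end

theory Submission
  imports Defs
begin

text \<open>Comparing coefficients of \<open>x\<^sup>k\<close> turns the equation into a three-term recurrence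
  for the coefficients of \<open>R\<close>.  For \<open>R\<close> a series in \<open>x\<^sup>-\<^sup>1\<close> the coefficients of \<open>x\<close> and
  \<open>x\<^sup>0\<close> fix \<open>d\<^sub>1\<close> and \<open>d\<^sub>2\<close>, and the coefficient of \<open>x\<^sup>-\<^sup>n\<close> (\<open>n \<ge> 1\<close>) can be solved for
  \<open>d\<^sub>n\<^sub>+\<^sub>2\<close> because its factor \<open>4(n+2)\<pi>\<^sup>2\<close> never vanishes.\<close>

lemma ode_lhs_coeff:
  "ode_lhs p q R k = of_int (k + 1) * (of_int k ^ 2 - 4 * p^2) * R k
     - 4 * q * of_int (2 * k - 1) * R (k - 1) + 4 * of_int (k - 2) * R (k - 2)"
  unfolding ode_lhs_def fser_xpow_def fser_deriv_def
  by (simp add: algebra_simps power2_eq_square)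

lemma R_series_neg:
  "R_series d (- int n) = (if n = 0 then 1 / pi else pi ^ (n - 1) * d n)"
  unfolding R_series_def by (auto simp: power_eq_if)

definition next_coeff :: "real \<Rightarrow> real \<Rightarrow> nat \<Rightarrow> real \<Rightarrow> real \<Rightarrow> real" where
  "next_coeff p q n a b = (1 / pi) * ((2 * real n + 1) / (real n + 2)) * q * b
     + (1 / pi^2) * ((real n - 1) / (real n + 2)) * (p^2 - (real n)^2 / 4) * a"

definition coeff_recurrence :: "real \<Rightarrow> real \<Rightarrow> (nat \<Rightarrow> real) \<Rightarrow> bool" where
  "coeff_recurrence p q d \<longleftrightarrow>
     d 1 = - q / pi \<and> d 2 = - (p^2 + q^2) / (2 * pi^2)
     \<and> (\<forall>n\<ge>1. d (n + 2) = next_coeff p q n (d n) (d (n + 1)))"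

lemma ode_lhs_R_series_pos:
  assumes "k \<ge> 2"
  shows "ode_lhs p q (R_series d) k = 0"
  using assms unfolding ode_lhs_coeff by (cases "k = 2") (auto simp: R_series_def)

lemma ode_lhs_R_series_1: "ode_lhs p q (R_series d) 1 = 4 * (- q / pi - d 1)"
  unfolding ode_lhs_coeff by (simp add: R_series_def)

lemma ode_lhs_R_series_0:
  "pi * ode_lhs p q (R_series d) 0 = 4 * (q * (pi * d 1) - p^2 - 2 * pi^2 * d 2)"
  unfolding ode_lhs_coeff by (simp add: R_series_def field_simps power2_eq_square)

lemma next_coeff_scaled:
  "4 * (real n + 2) * pi^2 * next_coeff p q n a b
     = 4 * q * (2 * real n + 1) * pi * b + (real n - 1) * (4 * p^2 - real n ^ 2) * a"
  unfolding next_coeff_def by (simp add: divide_simps power2_eq_square) (simp add: algebra_simps)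

lemma ode_lhs_R_series_neg:
  assumes "n \<ge> 1"
  shows "ode_lhs p q (R_series d) (- int n) = 4 * (real n + 2) * pi ^ (n + 1) *
     (next_coeff p q n (d n) (d (n + 1)) - d (n + 2))"
proof -
  have shift: "- int n - 1 = - int (n + 1)" "- int n - 2 = - int (n + 2)" by auto
  have pi_pow: "pi ^ n = pi ^ (n - 1) * pi" "pi ^ (n + 1) = pi ^ (n - 1) * pi^2"
    using assms by (cases n; simp add: power2_eq_square)+
  have "ode_lhs p q (R_series d) (- int n) = pi ^ (n - 1) *
     ((1 - real n) * (real n ^ 2 - 4 * p^2) * d n + 4 * q * (2 * real n + 1) * pi * d (n + 1)
      - 4 * (real n + 2) * pi^2 * d (n + 2))"
    unfolding ode_lhs_coeff shift R_series_neg using assms pi_pow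
    by (simp add: algebra_simps power2_eq_square)
  also have "\<dots> = pi ^ (n - 1) * (4 * (real n + 2) * pi^2 * next_coeff p q n (d n) (d (n + 1))
      - 4 * (real n + 2) * pi^2 * d (n + 2))"
    unfolding next_coeff_scaled by (simp add: algebra_simps)
  also have "\<dots> = 4 * (real n + 2) * pi ^ (n + 1) * (next_coeff p q n (d n) (d (n + 1)) - d (n + 2))"
    unfolding pi_pow by (simp add: algebra_simps)
  finally show ?thesis .
qed

lemma ode_lhs_R_series_eq_0_iff:
  "ode_lhs p q (R_series d) = (\<lambda>k. 0) \<longleftrightarrow> coeff_recurrence p q d"
proof
  assume ode: "ode_lhs p q (R_series d) = (\<lambda>k. 0)"
  have d1: "d 1 = - q / pi"
    using ode_lhs_R_series_1[of p q d] ode by simp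
  have "pi * ode_lhs p q (R_series d) 0 = 0" using ode by simp
  then have d2: "d 2 = - (p^2 + q^2) / (2 * pi^2)"
    unfolding ode_lhs_R_series_0 d1 by (simp add: field_simps power2_eq_square)
  have "d (n + 2) = next_coeff p q n (d n) (d (n + 1))" if "n \<ge> 1" for n
    using ode_lhs_R_series_neg[OF that, of p q d] ode by simp
  with d1 d2 show "coeff_recurrence p q d" unfolding coeff_recurrence_def by blast
next
  assume rec: "coeff_recurrence p q d"
  show "ode_lhs p q (R_series d) = (\<lambda>k. 0)"
  proof
    fix k :: int
    consider "k \<ge> 2" | "k = 1" | "k = 0" | "k < 0" by linarith
    then show "ode_lhs p q (R_series d) k = 0"
    proof cases
      case 1
      then show ?thesis by (rule ode_lhs_R_series_pos)
    next
      case 2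
      then show ?thesis using rec by (simp add: ode_lhs_R_series_1 coeff_recurrence_def)
    next
      case 3
      have d1: "pi * d 1 = - q" and d2: "2 * pi^2 * d 2 = - (p^2 + q^2)"
        using rec by (simp_all add: coeff_recurrence_def)
      have "pi * ode_lhs p q (R_series d) 0 = 0"
        unfolding ode_lhs_R_series_0 d1 d2 by (simp add: power2_eq_square)
      with 3 show ?thesis by simp
    next
      case 4
      then obtain n where "k = - int n" "n \<ge> 1"
        by (intro that[of "nat (- k)"]) auto
      then show ?thesis
        using rec by (simp add: ode_lhs_R_series_neg coeff_recurrence_def)
    qed
  qed
qed
fun rec_coeffs :: "real \<Rightarrow> real \<Rightarrow> nat \<Rightarrow> real" where
  "rec_coeffs p q 0 = 0"
| "rec_coeffs p q (Suc 0) = - q / pi"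
| "rec_coeffs p q (Suc (Suc 0)) = - (p^2 + q^2) / (2 * pi^2)"
| "rec_coeffs p q (Suc (Suc (Suc n))) =
     next_coeff p q (Suc n) (rec_coeffs p q (Suc n)) (rec_coeffs p q (Suc (Suc n)))"

lemma coeff_recurrence_rec_coeffs: "coeff_recurrence p q (rec_coeffs p q)"
  unfolding coeff_recurrence_def
proof (intro conjI allI impI)
  fix n :: nat assume "n \<ge> 1"
  then obtain m where "n = Suc m" by (cases n) auto
  then show "rec_coeffs p q (n + 2) = next_coeff p q n (rec_coeffs p q n) (rec_coeffs p q (n + 1))"
    by (simp add: numeral_2_eq_2)
qed (auto simp: numeral_2_eq_2)

lemma coeff_recurrence_unique:
  assumes "coeff_recurrence p q d" "coeff_recurrence p q d'" "n \<ge> 1"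
  shows "d n = d' n"
  using assms(3)
proof (induction n rule: less_induct)
  case (less n)
  show ?case
  proof (cases "n \<le> 2")
    case True
    with less.prems have "n = 1 \<or> n = 2" by auto
    then show ?thesis using assms unfolding coeff_recurrence_def by auto
  next
    case False
    then obtain m where m: "n = m + 2" "m \<ge> 1"
      by (intro that[of "n - 2"]) auto
    have "d m = d' m" "d (m + 1) = d' (m + 1)" using less.IH m by auto
    then show ?thesis using assms m unfolding coeff_recurrence_def by auto
  qed
qed

theorem proposition2p10:
  fixes p q :: real
  shows "(\<exists>d. ode_lhs p q (R_series d) = (\<lambda>k. 0))
    \<and> (\<forall>d d'. ode_lhs p q (R_series d) = (\<lambda>k. 0) \<and> ode_lhs p q (R_series d') = (\<lambda>k. 0)
          \<longrightarrow> (\<forall>n\<ge>1. d n = d' n))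
    \<and> (\<forall>d. ode_lhs p q (R_series d) = (\<lambda>k. 0) \<longrightarrow>
          d 1 = - q / pi
        \<and> d 2 = - (p^2 + q^2) / (2 * pi^2)
        \<and> (\<forall>n\<ge>1. d (n + 2) = (1 / pi) * ((2 * real n + 1) / (real n + 2)) * q * d (n + 1)
                 + (1 / pi^2) * ((real n - 1) / (real n + 2)) * (p^2 - (real n)^2 / 4) * d n))"
proof -
  have paper_form: "coeff_recurrence p q d \<longleftrightarrow>
      d 1 = - q / pi \<and> d 2 = - (p^2 + q^2) / (2 * pi^2)
      \<and> (\<forall>n\<ge>1. d (n + 2) = (1 / pi) * ((2 * real n + 1) / (real n + 2)) * q * d (n + 1)
               + (1 / pi^2) * ((real n - 1) / (real n + 2)) * (p^2 - (real n)^2 / 4) * d n)"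
    for d
    unfolding coeff_recurrence_def next_coeff_def ..
  show ?thesis
    unfolding ode_lhs_R_series_eq_0_iff paper_form[symmetric]
    using coeff_recurrence_rec_coeffs coeff_recurrence_unique by blast
qed

end
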